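(* Let $N,h\in\mathbb{N}$, let $\mathcal{T}$ be an $(N,h)$-regular rooted tree, let $\mathcal{S}\subset\mathcal{T}$ be a subtree, and let $1\le m\le N$ be an integer. Suppose that for every $(m,h)$-regular subtree $\mathcal{R}$ of $\mathcal{T}$, $\mathcal{S}_h\cap\mathcal{R}_h\neq\emptyset$. Then $\mathcal{S}$ has an $(N-m+1,h)$-regular subtree.
   Context: A rooted tree is a connected graph without cycles with a distinguished vertex (the root), identified with its vertex set. The height of a vertex is the length of the unique path from the root; for a rooted tree $\mathcal{T}$, $\mathcal{T}_n$ denotes the set of vertices of height $n$. A successor of a vertex $\tau'$ is a vertex adjacent to $\tau'$ of height one greater. A subtree of $\mathcal{T}$ means a subset of vertices containing the root and closed under taking predecessors. A finite rooted tree is $(N,h)$-regular if it has no vertices of height $h+1$ and every vertex of height less than $h$ has exactly $N$ successors. *)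

theory Defs
  imports Main
begin

definition rooted_tree :: "'a set \<Rightarrow> 'a \<Rightarrow> ('a \<Rightarrow> 'a) \<Rightarrow> bool" where
  "rooted_tree V r p \<longleftrightarrow> r \<in> V \<and> (\<forall>v\<in>V. v \<noteq> r \<longrightarrow> p v \<in> V)
     \<and> (\<forall>v\<in>V. \<exists>n. (p ^^ n) v = r)"

definition hgt :: "'a \<Rightarrow> ('a \<Rightarrow> 'a) \<Rightarrow> 'a \<Rightarrow> nat" where
  "hgt r p v = (LEAST n. (p ^^ n) v = r)"

definition level :: "'a set \<Rightarrow> 'a \<Rightarrow> ('a \<Rightarrow> 'a) \<Rightarrow> nat \<Rightarrow> 'a set" where
  "level V r p n = {v \<in> V. hgt r p v = n}"

definition succs :: "'a set \<Rightarrow> 'a \<Rightarrow> ('a \<Rightarrow> 'a) \<Rightarrow> 'a \<Rightarrow> 'a set" where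
  "succs V r p v = {w \<in> V. w \<noteq> r \<and> p w = v}"

definition subtree :: "'a set \<Rightarrow> 'a \<Rightarrow> ('a \<Rightarrow> 'a) \<Rightarrow> 'a set \<Rightarrow> bool" where
  "subtree V r p S \<longleftrightarrow> S \<subseteq> V \<and> r \<in> S \<and> (\<forall>v\<in>S. v \<noteq> r \<longrightarrow> p v \<in> S)"

definition regular :: "nat \<Rightarrow> nat \<Rightarrow> 'a set \<Rightarrow> 'a \<Rightarrow> ('a \<Rightarrow> 'a) \<Rightarrow> bool" where
  "regular N h V r p \<longleftrightarrow> finite V \<and> level V r p (h + 1) = {}
     \<and> (\<forall>v\<in>V. hgt r p v < h \<longrightarrow> card (succs V r p v) = N)"

end

theory Submission
  imports Defs
begin

(* Proof idea: a finite positional game on the tree T.  Call a vertex v "winning"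
   for S (with threshold k = N - m + 1) if v is in S and, when v lies below height h,
   at least k of its successors are winning.  This is well defined by recursion on
   h - height v.
   - If the root is winning, choosing k winning successors at every winning vertex
     generates a (k,h)-regular subtree consisting of winning vertices, all in S.
   - If the root is losing, every losing vertex below height h has fewer than k
     winning successors, hence at least N - (k - 1) = m losing ones; choosing m of
     them everywhere generates an (m,h)-regular subtree R of losing vertices.  By
     hypothesis R meets S at height h, but such a common leaf is winning. *)

lemma card_filter_split:
  assumes "finite A"
  shows "card {x \<in> A. P x} + card {x \<in> A. \<not> P x} = card A"
proof -
  have "card ({x \<in> A. P x} \<union> {x \<in> A. \<not> P x}) = card {x \<in> A. P x} + card {x \<in> A. \<not> P x}"
    by (rule card_Un_disjoint) (use assms in auto)
  moreover have "{x \<in> A. P x} \<union> {x \<in> A. \<not> P x} = A" by blast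
  ultimately show ?thesis by simp
qed

lemma hgt_pred:
  assumes "rooted_tree V r p" "w \<in> V" "w \<noteq> r"
  shows "hgt r p w = Suc (hgt r p (p w))"
proof -
  have "p w \<in> V" using assms by (auto simp: rooted_tree_def)
  then obtain n where n: "(p ^^ n) (p w) = r" using assms(1) by (auto simp: rooted_tree_def)
  have reach_pw: "(p ^^ hgt r p (p w)) (p w) = r"
    unfolding hgt_def by (rule LeastI[of _ n]) (rule n)
  have "(p ^^ Suc (hgt r p (p w))) w = r"
    using reach_pw by (simp add: funpow_Suc_right del: funpow.simps)
  then have upper: "hgt r p w \<le> Suc (hgt r p (p w))" unfolding hgt_def by (rule Least_le)
  have reach_w: "(p ^^ hgt r p w) w = r" unfolding hgt_def
    by (rule LeastI[of _ "Suc n"]) (simp add: funpow_Suc_right n del: funpow.simps)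
  then obtain k where k: "hgt r p w = Suc k" using assms(3) by (cases "hgt r p w") auto
  then have "(p ^^ k) (p w) = r" using reach_w by (simp add: funpow_Suc_right del: funpow.simps)
  then have "hgt r p (p w) \<le> k" unfolding hgt_def by (rule Least_le)
  then show ?thesis using upper k by simp
qed

lemma hgt_succs:
  assumes "rooted_tree V r p" "w \<in> succs V r p v"
  shows "hgt r p w = Suc (hgt r p v)"
  using assms hgt_pred[OF assms(1)] by (auto simp: succs_def)

inductive_set generated :: "'a \<Rightarrow> ('a \<Rightarrow> 'a set) \<Rightarrow> 'a set" for r sel where
  root: "r \<in> generated r sel"
| select: "v \<in> generated r sel \<Longrightarrow> w \<in> sel v \<Longrightarrow> w \<in> generated r sel"

lemma generated_subset: "generated r sel \<subseteq> insert r (\<Union>v. sel v)"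
proof
  fix v assume "v \<in> generated r sel"
  then show "v \<in> insert r (\<Union>v. sel v)" by (cases rule: generated.cases) auto
qed

lemma generated_subtree:
  assumes "r \<in> V" and sel: "\<And>v. sel v \<subseteq> succs V r p v"
  shows "subtree V r p (generated r sel)"
    and "v \<in> generated r sel \<Longrightarrow> succs (generated r sel) r p v = sel v"
proof -
  show "subtree V r p (generated r sel)"
    unfolding subtree_def
  proof (intro conjI ballI impI)
    show "generated r sel \<subseteq> V" using generated_subset sel assms(1) by (fastforce simp: succs_def)
    show "r \<in> generated r sel" by (rule generated.root)
    fix w assume "w \<in> generated r sel" "w \<noteq> r"
    then obtain v where "v \<in> generated r sel" "w \<in> sel v"
      by (cases rule: generated.cases) auto
    then show "p w \<in> generated r sel" using sel[of v] by (auto simp: succs_def)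
  qed
next
  assume v: "v \<in> generated r sel"
  show "succs (generated r sel) r p v = sel v"
  proof
    show "sel v \<subseteq> succs (generated r sel) r p v"
      using sel[of v] generated.select[OF v] by (auto simp: succs_def)
    show "succs (generated r sel) r p v \<subseteq> sel v"
    proof
      fix w assume w: "w \<in> succs (generated r sel) r p v"
      then have "w \<in> generated r sel" "w \<noteq> r" by (auto simp: succs_def)
      then obtain u where "u \<in> generated r sel" "w \<in> sel u"
        by (cases rule: generated.cases) auto
      then show "w \<in> sel v" using sel[of u] w by (auto simp: succs_def)
    qed
  qed
qed

lemma pruned_regular_subtree:
  assumes V: "regular N h V r p" and "r \<in> V" and "P r"
    and many: "\<And>v. v \<in> V \<Longrightarrow> P v \<Longrightarrow> hgt r p v < h \<Longrightarrow> k \<le> card {w \<in> succs V r p v. P w}"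
  shows "\<exists>Q. subtree V r p Q \<and> regular k h Q r p \<and> (\<forall>v\<in>Q. P v)"
proof -
  let ?good = "\<lambda>v A. A \<subseteq> {w \<in> succs V r p v. P w} \<and> card A = k"
  define sel where
    "sel v = (if v \<in> V \<and> P v \<and> hgt r p v < h then SOME A. ?good v A else {})" for v
  have sel_good: "?good v (sel v)" if v: "v \<in> V" "P v" "hgt r p v < h" for v
  proof -
    obtain A where "?good v A" using obtain_subset_with_card_n[OF many[OF v]] by blast
    then show ?thesis using v someI[of "?good v"] by (simp add: sel_def)
  qed
  have sel_P: "sel v \<subseteq> {w \<in> succs V r p v. P w}" for v
    using sel_good[of v] by (auto simp: sel_def)
  define Q where "Q = generated r sel"
  have sub: "subtree V r p Q" and succs_Q: "\<And>v. v \<in> Q \<Longrightarrow> succs Q r p v = sel v"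
    using generated_subtree[of r V sel p] assms(2) sel_P unfolding Q_def by blast+
  have QP: "\<forall>v\<in>Q. P v" using generated_subset[of r sel] sel_P \<open>P r\<close> unfolding Q_def by blast
  have "regular k h Q r p"
    unfolding regular_def
  proof (intro conjI ballI impI)
    have "Q \<subseteq> V" using sub by (simp add: subtree_def)
    then show "finite Q" "level Q r p (h + 1) = {}"
      using V by (auto simp: regular_def level_def intro: finite_subset)
    fix v assume "v \<in> Q" "hgt r p v < h"
    then show "card (succs Q r p v) = k" using succs_Q sel_good QP \<open>Q \<subseteq> V\<close> by auto
  qed
  then show ?thesis using sub QP by blast
qed

primrec wins :: "'a set \<Rightarrow> 'a set \<Rightarrow> 'a \<Rightarrow> ('a \<Rightarrow> 'a) \<Rightarrow> nat \<Rightarrow> nat \<Rightarrow> 'a \<Rightarrow> bool" where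
  "wins S V r p k 0 v = (v \<in> S)"
| "wins S V r p k (Suc d) v = (v \<in> S \<and> k \<le> card {w \<in> succs V r p v. wins S V r p k d w})"

definition winning :: "'a set \<Rightarrow> 'a set \<Rightarrow> 'a \<Rightarrow> ('a \<Rightarrow> 'a) \<Rightarrow> nat \<Rightarrow> nat \<Rightarrow> 'a \<Rightarrow> bool" where
  "winning S V r p k h v = wins S V r p k (h - hgt r p v) v"

lemma winning_in: "winning S V r p k h v \<Longrightarrow> v \<in> S"
  by (cases "h - hgt r p v") (auto simp: winning_def)

lemma winning_leaf: "v \<in> level S r p h \<Longrightarrow> winning S V r p k h v"
  by (simp add: winning_def level_def)

lemma winning_unfold:
  assumes "rooted_tree V r p" "hgt r p v < h"
  shows "winning S V r p k h v
           \<longleftrightarrow> v \<in> S \<and> k \<le> card {w \<in> succs V r p v. winning S V r p k h w}"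
proof -
  obtain d where d: "h - hgt r p v = Suc d" using assms(2) by (metis Suc_diff_Suc)
  have "winning S V r p k h w = wins S V r p k d w" if "w \<in> succs V r p v" for w
  proof -
    have "h - hgt r p w = d" using hgt_succs[OF assms(1) that] d by linarith
    then show ?thesis by (simp add: winning_def)
  qed
  then have "{w \<in> succs V r p v. winning S V r p k h w} = {w \<in> succs V r p v. wins S V r p k d w}"
    by blast
  then show ?thesis using d by (simp add: winning_def)
qed

lemma winning_root_subtree:
  assumes "rooted_tree V r p" "regular N h V r p" "subtree V r p S"
    and "winning S V r p k h r"
  shows "\<exists>Q. subtree S r p Q \<and> regular k h Q r p"
proof -
  have "r \<in> V" using assms(1) by (simp add: rooted_tree_def)
  moreover have "k \<le> card {w \<in> succs V r p v. winning S V r p k h w}"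
    if "winning S V r p k h v" "hgt r p v < h" for v
    using winning_unfold[OF assms(1) that(2)] that(1) by blast
  ultimately obtain Q where Q: "subtree V r p Q" "regular k h Q r p" "\<forall>v\<in>Q. winning S V r p k h v"
    using pruned_regular_subtree[where P="winning S V r p k h", OF assms(2) _ assms(4)] by blast
  then have "Q \<subseteq> S" by (auto dest: winning_in)
  then show ?thesis using Q(1,2) by (auto simp: subtree_def)
qed

text \<open>A losing vertex below height h has at least m losing successors, provided
  k + m \<le> N + 1: in S it has fewer than k winning successors, outside S none.\<close>

lemma losing_succs:
  assumes "rooted_tree V r p" "regular N h V r p" "subtree V r p S"
    and "k + m \<le> N + 1" "m \<le> N"
    and "v \<in> V" "\<not> winning S V r p k h v" "hgt r p v < h"
  shows "m \<le> card {w \<in> succs V r p v. \<not> winning S V r p k h w}"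
proof -
  let ?W = "{w \<in> succs V r p v. winning S V r p k h w}"
  have "finite (succs V r p v)" using assms(2) by (simp add: regular_def succs_def)
  moreover have "card (succs V r p v) = N" using assms(2,6,8) by (simp add: regular_def)
  ultimately have split: "card ?W + card {w \<in> succs V r p v. \<not> winning S V r p k h w} = N"
    using card_filter_split by metis
  show ?thesis
  proof (cases "v \<in> S")
    case True
    then have "card ?W < k" using winning_unfold[OF assms(1,8)] assms(7) by simp
    then show ?thesis using split assms(4) by linarith
  next
    case False
    have "?W = {}"
      using False assms(3) winning_in by (fastforce simp: subtree_def succs_def)
    then show ?thesis using split assms(5) by (metis add_0 card.empty)
  qed
qed

lemma losing_root_subtree:
  assumes "rooted_tree V r p" "regular N h V r p" "subtree V r p S"
    and "k + m \<le> N + 1" "m \<le> N" "\<not> winning S V r p k h r"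
  shows "\<exists>R. subtree V r p R \<and> regular m h R r p \<and> (\<forall>v\<in>R. \<not> winning S V r p k h v)"
proof -
  have "r \<in> V" using assms(1) by (simp add: rooted_tree_def)
  moreover have "m \<le> card {w \<in> succs V r p v. \<not> winning S V r p k h w}"
    if "v \<in> V" "\<not> winning S V r p k h v" "hgt r p v < h" for v
    using losing_succs[OF assms(1-5) that] .
  ultimately show ?thesis
    using pruned_regular_subtree[where P="\<lambda>v. \<not> winning S V r p k h v", OF assms(2) _ assms(6)]
    by blast
qed

theorem lemma2p2:
  fixes V S :: "'a set" and r :: 'a and p :: "'a \<Rightarrow> 'a" and N h m :: nat
  assumes "rooted_tree V r p"
    and "regular N h V r p"
    and "subtree V r p S"
    and "1 \<le> m" and "m \<le> N"
    and "\<forall>R. subtree V r p R \<and> regular m h R r p \<longrightarrow> level S r p h \<inter> level R r p h \<noteq> {}"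
  shows "\<exists>Q. subtree S r p Q \<and> regular (N - m + 1) h Q r p"
proof (cases "winning S V r p (N - m + 1) h r")
  case True
  then show ?thesis using winning_root_subtree[OF assms(1-3)] by blast
next
  case False
  have "(N - m + 1) + m \<le> N + 1" using assms(5) by simp
  then obtain R where R: "subtree V r p R" "regular m h R r p"
      "\<forall>v\<in>R. \<not> winning S V r p (N - m + 1) h v"
    using losing_root_subtree[OF assms(1-3) _ assms(5) False] by blast
  then obtain x where "x \<in> level S r p h" "x \<in> level R r p h" using assms(6) by blast
  then show ?thesis using R(3) winning_leaf[of x S r p h V "N - m + 1"] by (simp add: level_def)
qed

end
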